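(* For every integer $k\ge 5$, $m_2^{(k-3)}(k-1,k-2)=k+1$.
   Context: For a prime power $q$ and $N\ge1$, a multiset of points in $\mathrm{PG}(N,q)$ is a map $\mathcal{K}$ from the points to $\mathbb{Z}_{\ge0}$, with $\mathcal{K}(S)=\sum_{P\in S}\mathcal{K}(P)$; its cardinality is $\mathcal{K}(\mathrm{PG}(N,q))$. Dimensions are projective (so $(N-2)$-dimensional subspaces of $\mathrm{PG}(N,q)$ are those of codimension two). For $0\le r\le N-1$ and a positive integer $w$, $m_q^{(r)}(N,w)$ is the maximum cardinality of a multiset of points in $\mathrm{PG}(N,q)$ such that every $r$-dimensional subspace has multiplicity at most $w$. *)

theory Defs
  imports Main
begin

text \<open>The underlying vector space F^(N+1) of PG(N,F), vectors as functions nat => F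
  supported on {0..N}.\<close>
definition vecs :: "nat \<Rightarrow> (nat \<Rightarrow> 'a::field) set" where
  "vecs N = {v. \<forall>i>N. v i = 0}"

definition lin_span :: "(nat \<Rightarrow> 'a::field) set \<Rightarrow> (nat \<Rightarrow> 'a) set" where
  "lin_span B = {v. \<exists>c. v = (\<lambda>i. \<Sum>b\<in>B. c b * b i)}"

definition lin_indep :: "(nat \<Rightarrow> 'a::field) set \<Rightarrow> bool" where
  "lin_indep B \<longleftrightarrow> (\<forall>c. (\<forall>i. (\<Sum>b\<in>B. c b * b i) = 0) \<longrightarrow> (\<forall>b\<in>B. c b = 0))"

definition proj_points :: "nat \<Rightarrow> (nat \<Rightarrow> 'a::field) set set" where
  "proj_points N = {lin_span {v} | v. v \<in> vecs N \<and> v \<noteq> (\<lambda>_. 0)}"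

text \<open>Projective r-dimensional subspaces of PG(N,F): linear subspaces of F^(N+1)
  of (vector) dimension r+1.\<close>
definition proj_subspaces :: "nat \<Rightarrow> nat \<Rightarrow> (nat \<Rightarrow> 'a::field) set set" where
  "proj_subspaces N r =
     {lin_span B | B. finite B \<and> B \<subseteq> vecs N \<and> lin_indep B \<and> card B = r + 1}"

definition mult_of :: "nat \<Rightarrow> ((nat \<Rightarrow> 'a::field) set \<Rightarrow> nat) \<Rightarrow> (nat \<Rightarrow> 'a) set \<Rightarrow> nat" where
  "mult_of N K S = (\<Sum>P\<in>{P\<in>proj_points N. P \<subseteq> S}. K P)"

text \<open>m_q^(r)(N,w) over the finite field 'a (q = CARD('a)).\<close>
definition m_q :: "'a::{field,finite} itself \<Rightarrow> nat \<Rightarrow> nat \<Rightarrow> nat \<Rightarrow> nat" where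
  "m_q _ r N w = (GREATEST n. \<exists>K :: (nat \<Rightarrow> 'a) set \<Rightarrow> nat.
      (\<forall>S\<in>proj_subspaces N r. mult_of N K S \<le> w) \<and>
      n = (\<Sum>P\<in>proj_points N. K P))"

end

theory Submission
  imports Defs HOL.Vector_Spaces "HOL-Library.Function_Algebras" "HOL-Library.FuncSet"
begin

(*
  Over a field with two elements a point of PG(N,2) is {0, v} for a nonzero vector v of
  F_2^(N+1), and an (N-2)-space is the span of N-1 independent vectors.

  Lower bound: every N vectors of the frame e_0, ..., e_N, e_0 + ... + e_N are independent,
  so no (N-2)-space contains N of its N+2 points.

  Upper bound: every set of points spanning a space of dimension at most N-1 lies in an
  (N-2)-space, hence has total multiplicity at most N-1. Consequently a point of multiplicity
  at least 2 together with N-2 further points of the support is impossible, so when the support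
  has at least N points all multiplicities are 1, and any N points of the support are
  independent. But among N+3 vectors of F_2^(N+1) there are three distinct subsets with the
  same sum (2^(N+3) subsets, 2^(N+1) values); their pairwise symmetric differences are
  nonempty, sum to zero and have total size at most 2(N+3), so one of them has at most N
  elements (N >= 4), and N points containing it are dependent.
*)

lemma (in vector_space) dependent_if_sum_eq_0:
  assumes "finite D" "D \<noteq> {}" "(\<Sum>v\<in>D. v) = 0"
  shows "dependent D"
proof -
  have "(\<Sum>v\<in>D. 1 *s v) = 0" using assms(3) by simp
  then show ?thesis
    using assms(1,2) unfolding dependent_finite[OF assms(1)] by (intro exI[of _ "\<lambda>_. 1"]) auto
qed

lemma (in vector_space) dim_less_card_if_dependent:
  assumes "finite X" "dependent X"
  shows "dim X < card X"
proof -
  obtain B where B: "B \<subseteq> X" "independent B" "card B = dim X"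
    by (rule basis_exists)
  then have "B \<subset> X" using assms(2) by blast
  then show ?thesis using B(3) psubset_card_mono[OF assms(1)] by metis
qed

lemma pigeonhole_three:
  assumes "finite A" "2 * card (f ` A) < card A"
  obtains x y z where "x \<in> A" "y \<in> A" "z \<in> A" "x \<noteq> y" "x \<noteq> z" "y \<noteq> z"
    "f y = f x" "f z = f x"
proof -
  have "\<exists>c\<in>f ` A. 2 < card {x\<in>A. f x = c}"
  proof (rule ccontr)
    assume "\<not> ?thesis"
    then have small_fibres: "card {x\<in>A. f x = c} \<le> 2" if "c \<in> f ` A" for c
      using that by auto
    have "A = (\<Union>c\<in>f ` A. {x\<in>A. f x = c})" by auto
    then have "card A \<le> (\<Sum>c\<in>f ` A. card {x\<in>A. f x = c})"
      by (metis card_UN_le finite_imageI assms(1))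
    also have "\<dots> \<le> (\<Sum>c\<in>f ` A. 2)" by (rule sum_mono) (rule small_fibres)
    finally show False using assms(2) by simp
  qed
  then obtain c where "2 < card {x\<in>A. f x = c}" by blast
  then have "3 \<le> card {x\<in>A. f x = c}" by simp
  then obtain F where "F \<subseteq> {x\<in>A. f x = c}" "card F = 3" by (rule obtain_subset_with_card_n)
  then show thesis using that unfolding card_3_iff by auto
qed

lemma sum_sym_diff_char_2:
  fixes A B :: "'b::ab_group_add set"
  assumes char2: "\<And>x::'b. x + x = 0" and A: "finite A" and B: "finite B"
  shows "\<Sum>(sym_diff A B) = \<Sum>A + \<Sum>B"
proof -
  have "\<Sum>A + \<Sum>B = \<Sum>(A - B) + \<Sum>(B - A) + (\<Sum>(A \<inter> B) + \<Sum>(A \<inter> B))"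
    using sum.Int_Diff[OF A, of "\<lambda>x. x" B] sum.Int_Diff[OF B, of "\<lambda>x. x" A]
    by (simp add: Int_commute algebra_simps)
  also have "\<dots> = \<Sum>(sym_diff A B)"
    using A B by (simp add: char2 sum.union_disjoint Diff_Int_distrib2)
  finally show ?thesis ..
qed

lemma card_sym_diff_add_card_Int:
  assumes "finite A" "finite B"
  shows "card (sym_diff A B) + card (A \<inter> B) = card (A \<union> B)"
proof -
  have "card (A \<union> B) = card (sym_diff A B \<union> (A \<inter> B))"
    by (rule arg_cong[where f = card]) blast
  also have "\<dots> = card (sym_diff A B) + card (A \<inter> B)"
    using assms by (intro card_Un_disjoint) auto
  finally show ?thesis by simp
qed

lemma short_zero_sum_subset:
  fixes T :: "'b::ab_group_add set"
  assumes char2: "\<And>x::'b. x + x = 0" and T: "finite T"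
    and few_sums: "2 * card ((\<lambda>Y. \<Sum>Y) ` Pow T) < 2 ^ card T"
  obtains D where "D \<subseteq> T" "D \<noteq> {}" "3 * card D \<le> 2 * card T" "\<Sum>D = 0"
proof -
  obtain Y1 Y2 Y3 where Y: "Y1 \<subseteq> T" "Y2 \<subseteq> T" "Y3 \<subseteq> T" "Y1 \<noteq> Y2" "Y1 \<noteq> Y3" "Y2 \<noteq> Y3"
    "\<Sum>Y2 = \<Sum>Y1" "\<Sum>Y3 = \<Sum>Y1"
    using pigeonhole_three[of "Pow T" "\<lambda>Y. \<Sum>Y"] T few_sums by (auto simp: card_Pow)
  have zero_sum: "D \<subseteq> T \<and> D \<noteq> {} \<and> \<Sum>D = 0"
    if "D = sym_diff A B" "A \<subseteq> T" "B \<subseteq> T" "A \<noteq> B" "\<Sum>A = \<Sum>B" for D A B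
    using that sum_sym_diff_char_2[OF char2, of A B] finite_subset[OF _ T] char2 by auto
  define D12 where "D12 = sym_diff Y1 Y2"
  define D13 where "D13 = sym_diff Y1 Y3"
  define D23 where "D23 = sym_diff Y2 Y3"
  note zero_sums = zero_sum[OF D12_def Y(1,2,4)] zero_sum[OF D13_def Y(1,3,5)]
    zero_sum[OF D23_def Y(2,3,6)]
  have fin: "finite D12" "finite D13"
    using Y(1-3) T by (auto simp: D12_def D13_def intro: finite_subset)
  have "D23 = sym_diff D12 D13" by (auto simp: D12_def D13_def D23_def)
  then have "card D23 + card (D12 \<inter> D13) = card (D12 \<union> D13)"
    using card_sym_diff_add_card_Int[OF fin] by simp
  moreover have "card (D12 \<union> D13) + card (D12 \<inter> D13) = card D12 + card D13"
    using card_Un_Int[OF fin] by simp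
  moreover have "card (D12 \<union> D13) \<le> card T"
    using Y(1-3) by (intro card_mono[OF T]) (auto simp: D12_def D13_def)
  \<comment> \<open>every element of T lies in at most two of D12, D13, D23\<close>
  ultimately have "card D12 + card D13 + card D23 \<le> 2 * card T" by linarith
  then consider "3 * card D12 \<le> 2 * card T" | "3 * card D13 \<le> 2 * card T"
    | "3 * card D23 \<le> 2 * card T" by linarith
  then show thesis using zero_sums Y(7,8) that by cases auto
qed

definition vscale :: "'a::field \<Rightarrow> (nat \<Rightarrow> 'a) \<Rightarrow> nat \<Rightarrow> 'a" where
  "vscale c v = (\<lambda>i. c * v i)"

global_interpretation vec: vector_space "vscale :: 'a::field \<Rightarrow> _"
  by unfold_locales (auto simp: vscale_def fun_eq_iff algebra_simps)

lemma sum_fun_apply: "(\<Sum>b\<in>B. f b) i = (\<Sum>b\<in>B. (f b i :: 'a::comm_monoid_add))"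
  by (induction B rule: infinite_finite_induct) (auto simp: zero_fun_def)

lemma sum_vscale: "(\<Sum>b\<in>B. vscale (c b) b) = (\<lambda>i. \<Sum>b\<in>B. c b * b i)"
  by (simp add: fun_eq_iff sum_fun_apply vscale_def)

lemma lin_span_eq_span: "finite B \<Longrightarrow> lin_span B = vec.span B"
  by (auto simp: lin_span_def vec.span_finite sum_vscale)

lemma lin_indep_iff_independent: "finite B \<Longrightarrow> lin_indep B \<longleftrightarrow> vec.independent B"
  by (auto simp: lin_indep_def vec.dependent_finite sum_vscale fun_eq_iff)

lemma proj_subspaces_eq:
  "proj_subspaces N r =
     {vec.span B | B. finite B \<and> B \<subseteq> vecs N \<and> vec.independent B \<and> card B = r + 1}"
  unfolding proj_subspaces_def by (metis lin_span_eq_span lin_indep_iff_independent)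

lemma zero_mem_proj_subspace: "S \<in> proj_subspaces N r \<Longrightarrow> 0 \<in> S"
  by (auto simp: proj_subspaces_eq vec.span_zero)

lemma subspace_vecs: "vec.subspace (vecs N)"
  by (auto simp: vec.subspace_def vecs_def vscale_def)

lemma vecs_eq_image_PiE:
  "vecs N = (\<lambda>g i. if i \<le> N then g i else 0) ` (\<Pi>\<^sub>E i\<in>{..N}. UNIV)"
proof (intro equalityI subsetI)
  fix v :: "nat \<Rightarrow> 'a" assume "v \<in> vecs N"
  then have "v = (\<lambda>i. if i \<le> N then restrict v {..N} i else 0)"
    by (auto simp: vecs_def fun_eq_iff)
  then show "v \<in> (\<lambda>g i. if i \<le> N then g i else 0) ` (\<Pi>\<^sub>E i\<in>{..N}. UNIV)"
    by (intro image_eqI[where x = "restrict v {..N}"]) auto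
qed (auto simp: vecs_def)

lemma finite_vecs: "finite (vecs N :: (nat \<Rightarrow> 'a::{field,finite}) set)"
  by (simp add: vecs_eq_image_PiE finite_PiE)

lemma card_vecs_le:
  "card (vecs N :: (nat \<Rightarrow> 'a::{field,finite}) set) \<le> card (UNIV :: 'a set) ^ Suc N"
proof -
  have "card (vecs N :: (nat \<Rightarrow> 'a) set) \<le> card (\<Pi>\<^sub>E i\<in>{..N}. (UNIV :: 'a set))"
    unfolding vecs_eq_image_PiE by (rule card_image_le) (simp add: finite_PiE)
  then show ?thesis by (simp add: card_PiE)
qed

lemma field_card_2_cases:
  assumes "card (UNIV :: 'a::field set) = 2"
  shows "(x::'a) = 0 \<or> x = 1"
proof -
  have "finite (UNIV :: 'a set)" using assms card.infinite by fastforce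
  moreover have "card {0::'a, 1} = 2" by simp
  ultimately have "(UNIV :: 'a set) = {0, 1}"
    using assms by (metis card_subset_eq subset_UNIV)
  then show ?thesis by blast
qed

lemma field_card_2_add_self:
  assumes "card (UNIV :: 'a::field set) = 2"
  shows "(x::'a) + x = 0"
proof -
  have "(1::'a) + 1 = 0"
    using field_card_2_cases[OF assms, of "1 + 1"] by (metis add_cancel_right_right one_neq_zero)
  then show ?thesis by (metis distrib_left mult_1_right mult_zero_right)
qed

lemma lin_span_singleton_card_2:
  assumes "card (UNIV :: 'a::field set) = 2"
  shows "lin_span {v :: nat \<Rightarrow> 'a} = {0, v}"
proof -
  have "vscale c v \<in> {0, v}" for c
    using field_card_2_cases[OF assms, of c] by (auto simp: vscale_def zero_fun_def)
  moreover have "0 \<in> range (\<lambda>c. vscale c v)" "v \<in> range (\<lambda>c. vscale c v)"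
    by (metis rangeI vec.scale_zero_left, metis rangeI vec.scale_one)
  ultimately have "range (\<lambda>c. vscale c v) = {0, v}" by blast
  then show ?thesis by (simp add: lin_span_eq_span vec.span_singleton)
qed

definition nonzero_vecs :: "nat \<Rightarrow> (nat \<Rightarrow> 'a::field) set" where
  "nonzero_vecs N = vecs N - {0}"

lemma finite_nonzero_vecs: "finite (nonzero_vecs N :: (nat \<Rightarrow> 'a::{field,finite}) set)"
  by (simp add: nonzero_vecs_def finite_vecs)

lemma inj_on_insert_zero: "inj_on (\<lambda>v. {0, v}) (nonzero_vecs N)"
  by (rule inj_onI) (auto simp: nonzero_vecs_def doubleton_eq_iff)

lemma proj_points_card_2:
  assumes "card (UNIV :: 'a::field set) = 2"
  shows "proj_points N = (\<lambda>v. {0, v}) ` (nonzero_vecs N :: (nat \<Rightarrow> 'a) set)"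
  unfolding proj_points_def nonzero_vecs_def lin_span_singleton_card_2[OF assms]
  by (auto simp: zero_fun_def)

lemma sum_proj_points_card_2:
  assumes "card (UNIV :: 'a::field set) = 2"
  shows "(\<Sum>P\<in>proj_points N. K P) = (\<Sum>v\<in>(nonzero_vecs N :: (nat \<Rightarrow> 'a) set). K {0, v})"
  by (simp add: proj_points_card_2[OF assms] sum.reindex[OF inj_on_insert_zero])

lemma mult_of_card_2:
  assumes "card (UNIV :: 'a::field set) = 2" and "(0 :: nat \<Rightarrow> 'a) \<in> S"
  shows "mult_of N K S = (\<Sum>v\<in>{v\<in>nonzero_vecs N. v \<in> S}. K {0, v})"
proof -
  have "{P\<in>proj_points N. P \<subseteq> S} = (\<lambda>v. {0, v}) ` {v\<in>nonzero_vecs N. v \<in> S}"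
    using assms(2) by (auto simp: proj_points_card_2[OF assms(1)])
  moreover have "inj_on (\<lambda>v. {0, v}) {v\<in>nonzero_vecs N :: (nat \<Rightarrow> 'a) set. v \<in> S}"
    by (rule inj_on_subset[OF inj_on_insert_zero]) auto
  ultimately show ?thesis by (simp add: mult_of_def sum.reindex)
qed

definition unit_vec :: "nat \<Rightarrow> nat \<Rightarrow> 'a::field" where
  "unit_vec i = (\<lambda>j. if j = i then 1 else 0)"

definition all_ones :: "nat \<Rightarrow> nat \<Rightarrow> 'a::field" where
  "all_ones N = (\<lambda>j. if j \<le> N then 1 else 0)"

definition frame :: "nat \<Rightarrow> (nat \<Rightarrow> 'a::field) set" where
  "frame N = insert (all_ones N) (unit_vec ` {..N})"

lemma inj_unit_vec: "inj (unit_vec :: nat \<Rightarrow> nat \<Rightarrow> 'a::field)"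
proof (rule injI)
  fix i j assume "(unit_vec i :: nat \<Rightarrow> 'a) = unit_vec j"
  then have "(unit_vec i :: nat \<Rightarrow> 'a) i = unit_vec j i" by simp
  then show "i = j" by (auto simp: unit_vec_def split: if_splits)
qed

lemma card_unit_vecs: "card (unit_vec ` {..N} :: (nat \<Rightarrow> 'a::field) set) = N + 1"
  by (simp add: card_image inj_on_subset[OF inj_unit_vec])

lemma unit_vec_neq_all_ones:
  assumes "1 \<le> N"
  shows "unit_vec i \<noteq> (all_ones N :: nat \<Rightarrow> 'a::field)"
proof
  assume "unit_vec i = (all_ones N :: nat \<Rightarrow> 'a)"
  then have "unit_vec i (if i = 0 then 1 else 0) = (all_ones N (if i = 0 then 1 else 0) :: 'a)"
    by simp
  then show False using assms by (auto simp: unit_vec_def all_ones_def split: if_splits)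
qed

lemma all_ones_notin_unit_vecs:
  "1 \<le> N \<Longrightarrow> all_ones N \<notin> (unit_vec ` {..N} :: (nat \<Rightarrow> 'a::field) set)"
  using unit_vec_neq_all_ones by (metis imageE)

lemma card_frame: "1 \<le> N \<Longrightarrow> card (frame N :: (nat \<Rightarrow> 'a::field) set) = N + 2"
  by (simp add: frame_def card_unit_vecs all_ones_notin_unit_vecs)

lemma frame_subset_nonzero_vecs: "frame N \<subseteq> nonzero_vecs N"
proof -
  have "unit_vec i i \<noteq> (0 :: 'a)" "all_ones N 0 \<noteq> (0 :: 'a)" for i
    by (simp_all add: unit_vec_def all_ones_def)
  then have "unit_vec i \<noteq> (0 :: nat \<Rightarrow> 'a)" "all_ones N \<noteq> (0 :: nat \<Rightarrow> 'a)" for i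
    by (metis zero_fun_def)+
  then show ?thesis by (auto simp: frame_def nonzero_vecs_def vecs_def unit_vec_def all_ones_def)
qed

lemma coord_sum_frame_subset:
  assumes "1 \<le> N" "G \<subseteq> (frame N :: (nat \<Rightarrow> 'a::field) set)" "i \<le> N"
  shows "(\<Sum>w\<in>G. u w * w i) =
    (if unit_vec i \<in> G then u (unit_vec i) else 0) + (if all_ones N \<in> G then u (all_ones N) else 0)"
proof -
  have "u w * w i = (if w = unit_vec i then u w else 0) + (if w = all_ones N then u w else 0)"
    if w: "w \<in> G" for w
  proof -
    consider l where "l \<le> N" "w = unit_vec l" | "w = all_ones N"
      using w assms(2) by (auto simp: frame_def)
    then show ?thesis
    proof cases
      case 1
      then show ?thesis
        using unit_vec_neq_all_ones[OF assms(1), of l] inj_eq[OF inj_unit_vec, of l i]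
        by (auto simp: unit_vec_def)
    next
      case 2
      moreover have "w i = 1" using 2 assms(3) by (simp add: all_ones_def)
      moreover have "w \<noteq> unit_vec i" using 2 unit_vec_neq_all_ones[OF assms(1), of i] by metis
      ultimately show ?thesis by simp
    qed
  qed
  then have "(\<Sum>w\<in>G. u w * w i) =
      (\<Sum>w\<in>G. (if w = unit_vec i then u w else 0) + (if w = all_ones N then u w else 0))"
    by (rule sum.cong[OF refl])
  also have "\<dots> = (if unit_vec i \<in> G then u (unit_vec i) else 0) +
      (if all_ones N \<in> G then u (all_ones N) else 0)"
    using finite_subset[OF assms(2)] by (simp add: frame_def sum.distrib sum.delta')
  finally show ?thesis .
qed

lemma independent_proper_subset_frame:
  assumes N: "1 \<le> N" and G: "G \<subset> (frame N :: (nat \<Rightarrow> 'a::field) set)"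
  shows "vec.independent G"
proof -
  have G_sub: "G \<subseteq> frame N" using G by blast
  have fin: "finite G" using G_sub finite_subset by (auto simp: frame_def)
  have "u v = 0" if sum0: "(\<Sum>v\<in>G. vscale (u v) v) = 0" and v: "v \<in> G" for u v
  proof -
    have coord0: "(\<Sum>w\<in>G. u w * w i) = 0" for i
      using sum0 by (simp add: sum_vscale fun_eq_iff)
    have ones: "u (all_ones N) = 0" if "all_ones N \<in> G"
    proof -
      obtain j where "j \<le> N" "unit_vec j \<notin> G"
        using G \<open>all_ones N \<in> G\<close> by (auto simp: frame_def)
      then show ?thesis
        using coord0[of j] coord_sum_frame_subset[OF N G_sub \<open>j \<le> N\<close>, of u] that by simp
    qed
    consider i where "i \<le> N" "v = unit_vec i" | "v = all_ones N"
      using v G by (auto simp: frame_def)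
    then show ?thesis
    proof cases
      case 1
      then show ?thesis
        using coord0[of i] coord_sum_frame_subset[OF N G_sub \<open>i \<le> N\<close>, of u] v ones
        by (cases "all_ones N \<in> G") simp_all
    qed (use ones v in simp)
  qed
  then show ?thesis by (auto simp: vec.dependent_finite[OF fin])
qed

lemma card_frame_Int_proj_subspace_le:
  fixes S :: "(nat \<Rightarrow> 'a::field) set"
  assumes S: "S \<in> proj_subspaces N r" and r: "r < N"
  shows "card (frame N \<inter> S) \<le> r + 1"
proof (rule ccontr)
  assume "\<not> ?thesis"
  then obtain G where G: "G \<subseteq> frame N \<inter> S" "card G = r + 2"
    by (metis obtain_subset_with_card_n not_less_eq_eq add_Suc_right one_add_one plus_1_eq_Suc)
  obtain B where B: "S = vec.span B" "finite B" "card B = r + 1"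
    using S by (auto simp: proj_subspaces_eq)
  have "G \<noteq> frame N" using G(2) card_frame[of N, where 'a='a] r by auto
  then have "vec.independent G" using independent_proper_subset_frame[of N G] G(1) r by auto
  then have "card G \<le> card B" using vec.independent_span_bound[OF B(2)] G(1) B(1) by auto
  then show False using G(2) B(3) by simp
qed

lemma ex_multiset_frame:
  assumes two: "card (UNIV :: 'a::{field,finite} set) = 2" and N: "2 \<le> N"
  shows "\<exists>K :: (nat \<Rightarrow> 'a) set \<Rightarrow> nat.
    (\<forall>S\<in>proj_subspaces N (N - 2). mult_of N K S \<le> N - 1) \<and> N + 2 = (\<Sum>P\<in>proj_points N. K P)"
proof -
  define K :: "(nat \<Rightarrow> 'a) set \<Rightarrow> nat"
    where "K P = of_bool (P \<in> (\<lambda>v. {0, v}) ` frame N)" for P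
  have sum_K: "(\<Sum>v\<in>V. K {0, v}) = card (frame N \<inter> V)" if V: "V \<subseteq> nonzero_vecs N" for V
  proof -
    have "K {0, v} = of_bool (v \<in> frame N)" if "v \<in> V" for v
      using inj_on_image_mem_iff[OF inj_on_insert_zero _ frame_subset_nonzero_vecs] V that
      by (auto simp: K_def)
    then have "(\<Sum>v\<in>V. K {0, v}) = (\<Sum>v\<in>V. of_bool (v \<in> frame N))" by simp
    also have "\<dots> = card (frame N \<inter> V)"
      using finite_subset[OF V finite_nonzero_vecs] by (simp add: Int_commute)
    finally show ?thesis .
  qed
  have "(\<Sum>P\<in>proj_points N. K P) = N + 2"
    using sum_K[OF order_refl] frame_subset_nonzero_vecs[of N, where 'a='a]
      card_frame[of N, where 'a='a] N
    by (simp add: sum_proj_points_card_2[OF two] Int_absorb2)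
  moreover have "mult_of N K S \<le> N - 1" if S: "S \<in> proj_subspaces N (N - 2)" for S
  proof -
    have "mult_of N K S = card (frame N \<inter> {v\<in>nonzero_vecs N. v \<in> S})"
      using mult_of_card_2[OF two zero_mem_proj_subspace[OF S]] sum_K by simp
    also have "\<dots> = card (frame N \<inter> S)"
      using frame_subset_nonzero_vecs[of N] by (intro arg_cong[where f = card]) blast
    also have "\<dots> \<le> N - 1" using card_frame_Int_proj_subspace_le[OF S] N by simp
    finally show ?thesis .
  qed
  ultimately show ?thesis by (intro exI[of _ K]) auto
qed

lemma independent_unit_vecs:
  assumes "1 \<le> N"
  shows "vec.independent (unit_vec ` {..N} :: (nat \<Rightarrow> 'a::field) set)"
proof (rule independent_proper_subset_frame[OF assms])
  show "unit_vec ` {..N} \<subset> (frame N :: (nat \<Rightarrow> 'a) set)"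
    unfolding frame_def using all_ones_notin_unit_vecs[OF assms] by blast
qed

lemma proj_subspace_superset:
  fixes X :: "(nat \<Rightarrow> 'a::{field,finite}) set"
  assumes X: "X \<subseteq> vecs N" and dim: "vec.dim X \<le> r + 1" and r: "r < N"
  obtains S where "S \<in> proj_subspaces N r" "X \<subseteq> S"
proof -
  let ?E = "unit_vec ` {..N} :: (nat \<Rightarrow> 'a) set"
  obtain B where B: "B \<subseteq> X" "vec.independent B" "X \<subseteq> vec.span B" "card B = vec.dim X"
    by (rule vec.basis_exists)
  obtain C where C: "B \<subseteq> C" "C \<subseteq> B \<union> ?E" "vec.independent C" "B \<union> ?E \<subseteq> vec.span C"
    using vec.maximal_independent_subset_extend[of B "B \<union> ?E"] B(2) by blast
  have "?E \<subseteq> vecs N" by (auto simp: vecs_def unit_vec_def)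
  then have C_vecs: "C \<subseteq> vecs N" using C(2) B(1) X by blast
  then have "finite C" using finite_subset finite_vecs by blast
  have "card ?E \<le> card C"
    using vec.independent_span_bound[OF \<open>finite C\<close> independent_unit_vecs] C(4) r by auto
  then have "r + 1 \<le> card C" using card_unit_vecs[where 'a='a] r by simp
  moreover have "card B \<le> r + 1" using B(4) dim by simp
  ultimately obtain D where D: "B \<subseteq> D" "D \<subseteq> C" "card D = r + 1"
    using exists_subset_between[OF _ _ C(1) \<open>finite C\<close>] by blast
  have "vec.independent D" using vec.independent_mono[OF C(3) D(2)] .
  then have "vec.span D \<in> proj_subspaces N r"
    unfolding proj_subspaces_eq using D C_vecs \<open>finite C\<close>
    by (intro CollectI exI[of _ D]) (auto intro: finite_subset)
  moreover have "X \<subseteq> vec.span D" using B(3) vec.span_mono[OF D(1)] by blast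
  ultimately show thesis by (rule that)
qed

lemma sum_points_le_if_dim_le:
  fixes K :: "(nat \<Rightarrow> 'a::{field,finite}) set \<Rightarrow> nat"
  assumes two: "card (UNIV :: 'a set) = 2"
    and K: "\<forall>S\<in>proj_subspaces N r. mult_of N K S \<le> w"
    and X: "X \<subseteq> nonzero_vecs N" and dim: "vec.dim X \<le> r + 1" and r: "r < N"
  shows "(\<Sum>v\<in>X. K {0, v}) \<le> w"
proof -
  obtain S where S: "S \<in> proj_subspaces N r" "X \<subseteq> S"
    using proj_subspace_superset[OF _ dim r] X by (auto simp: nonzero_vecs_def)
  have "(\<Sum>v\<in>X. K {0, v}) \<le> (\<Sum>v\<in>{v\<in>nonzero_vecs N. v \<in> S}. K {0, v})"
  proof (rule sum_mono2)
    show "finite {v\<in>nonzero_vecs N. v \<in> S}"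
      by (rule finite_subset[where B = "nonzero_vecs N"]) (auto simp: finite_nonzero_vecs)
  qed (use X S(2) in auto)
  also have "\<dots> = mult_of N K S"
    using mult_of_card_2[OF two zero_mem_proj_subspace[OF S(1)]] by simp
  also have "\<dots> \<le> w" using K S(1) by blast
  finally show ?thesis .
qed

lemma short_zero_sum_subset_vecs:
  fixes T :: "(nat \<Rightarrow> 'a::{field,finite}) set"
  assumes two: "card (UNIV :: 'a set) = 2" and N: "4 \<le> N"
    and T: "T \<subseteq> vecs N" "N + 3 \<le> card T"
  obtains D where "D \<subseteq> T" "D \<noteq> {}" "card D \<le> N" "\<Sum>D = 0"
proof -
  obtain T0 where T0: "T0 \<subseteq> T" "card T0 = N + 3" "finite T0"
    using obtain_subset_with_card_n[OF T(2)] by blast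
  have "(\<lambda>Y. \<Sum>Y) ` Pow T0 \<subseteq> vecs N"
    using T0(1) T(1) by (auto intro!: vec.subspace_sum[OF subspace_vecs])
  then have "card ((\<lambda>Y. \<Sum>Y) ` Pow T0) \<le> card (vecs N :: (nat \<Rightarrow> 'a) set)"
    by (rule card_mono[OF finite_vecs])
  also have "\<dots> \<le> 2 ^ Suc N" using card_vecs_le[of N, where 'a='a] two by simp
  finally have "card ((\<lambda>Y. \<Sum>Y) ` Pow T0) \<le> 2 ^ Suc N" .
  moreover have "(2::nat) ^ card T0 = 4 * 2 ^ Suc N" by (simp add: T0(2) power_add)
  ultimately have "2 * card ((\<lambda>Y. \<Sum>Y) ` Pow T0) < 2 ^ card T0"
    using zero_less_power[of "2::nat" "Suc N"] by linarith
  moreover have "v + v = 0" for v :: "nat \<Rightarrow> 'a"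
    unfolding plus_fun_def zero_fun_def using field_card_2_add_self[OF two] by metis
  ultimately obtain D where D: "D \<subseteq> T0" "D \<noteq> {}" "3 * card D \<le> 2 * card T0" "\<Sum>D = 0"
    using short_zero_sum_subset[OF _ T0(3)] by blast
  moreover have "card D \<le> N" using D(3) T0(2) N by linarith
  ultimately show thesis using that T0(1) by blast
qed

lemma card_le_if_subsets_independent:
  fixes T :: "(nat \<Rightarrow> 'a::{field,finite}) set"
  assumes two: "card (UNIV :: 'a set) = 2" and N: "4 \<le> N" and T: "T \<subseteq> vecs N"
    and indep: "\<And>X. X \<subseteq> T \<Longrightarrow> card X = N \<Longrightarrow> vec.independent X"
  shows "card T \<le> N + 2"
proof (rule ccontr)
  assume "\<not> ?thesis"
  then have large: "N + 3 \<le> card T" by simp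
  obtain D where D: "D \<subseteq> T" "D \<noteq> {}" "card D \<le> N" "\<Sum>D = 0"
    by (rule short_zero_sum_subset_vecs[OF two N T large])
  have "finite T" using T finite_vecs finite_subset by blast
  moreover have "N \<le> card T" using large by simp
  ultimately obtain X where X: "D \<subseteq> X" "X \<subseteq> T" "card X = N"
    using exists_subset_between[OF D(3) _ D(1)] by blast
  have "vec.dependent D"
    using vec.dependent_if_sum_eq_0[OF finite_subset[OF D(1) \<open>finite T\<close>] D(2,4)] .
  then have "vec.dependent X" using X(1) by (rule vec.dependent_mono)
  then show False using indep[OF X(2,3)] by simp
qed

lemma weight_eq_1_if_low_dim_bounded:
  fixes w :: "(nat \<Rightarrow> 'a::field) \<Rightarrow> nat"
  assumes T: "finite T" "N - 1 \<le> card T" and N: "2 \<le> N"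
    and pos: "\<And>v. v \<in> T \<Longrightarrow> 0 < w v"
    and low_dim: "\<And>X. X \<subseteq> T \<Longrightarrow> vec.dim X \<le> N - 1 \<Longrightarrow> (\<Sum>v\<in>X. w v) \<le> N - 1"
    and v: "v \<in> T"
  shows "w v = 1"
proof (rule ccontr)
  assume "w v \<noteq> 1"
  then have "2 \<le> w v" using pos[OF v] by simp
  have sizes: "card {v} \<le> N - 1" "N - 1 \<le> card T" "{v} \<subseteq> T" using N T(2) v by auto
  obtain X where X: "{v} \<subseteq> X" "X \<subseteq> T" "card X = N - 1"
    using exists_subset_between[OF sizes T(1)] by blast
  have "finite X" using X(2) T(1) finite_subset by blast
  have "card (X - {v}) = (\<Sum>u\<in>X - {v}. 1)" by simp
  also have "\<dots> \<le> (\<Sum>u\<in>X - {v}. w u)" using X(2) pos by (intro sum_mono) (auto simp: Suc_le_eq)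
  finally have "card (X - {v}) \<le> (\<Sum>u\<in>X - {v}. w u)" .
  moreover have "(\<Sum>u\<in>X. w u) = w v + (\<Sum>u\<in>X - {v}. w u)"
    using X(1) \<open>finite X\<close> by (simp add: sum.remove)
  moreover have "card (X - {v}) = N - 2" using X(1,3) by simp
  ultimately have "N \<le> (\<Sum>u\<in>X. w u)" using \<open>2 \<le> w v\<close> N by linarith
  moreover have "vec.dim X \<le> N - 1" using vec.dim_le_card'[OF \<open>finite X\<close>] X(3) by simp
  then have "(\<Sum>u\<in>X. w u) \<le> N - 1" by (rule low_dim[OF X(2)])
  ultimately show False using N by linarith
qed

lemma sum_weights_le_if_low_dim_bounded:
  fixes w :: "(nat \<Rightarrow> 'a::{field,finite}) \<Rightarrow> nat"
  assumes two: "card (UNIV :: 'a set) = 2" and N: "4 \<le> N" and T: "T \<subseteq> vecs N"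
    and pos: "\<And>v. v \<in> T \<Longrightarrow> 0 < w v"
    and low_dim: "\<And>X. X \<subseteq> T \<Longrightarrow> vec.dim X \<le> N - 1 \<Longrightarrow> (\<Sum>v\<in>X. w v) \<le> N - 1"
  shows "(\<Sum>v\<in>T. w v) \<le> N + 2"
proof -
  have "finite T" using T finite_vecs finite_subset by blast
  show ?thesis
  proof (cases "N \<le> card T")
    case False
    then have "vec.dim T \<le> N - 1" using vec.dim_le_card'[OF \<open>finite T\<close>] by simp
    then show ?thesis using low_dim[OF order_refl] by fastforce
  next
    case True
    then have sizes: "N - 1 \<le> card T" "2 \<le> N" using N by auto
    have sum_eq_card: "(\<Sum>v\<in>X. w v) = card X" if "X \<subseteq> T" for X
    proof -
      have "(\<Sum>v\<in>X. w v) = (\<Sum>v\<in>X. 1)"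
        using that weight_eq_1_if_low_dim_bounded[OF \<open>finite T\<close> sizes pos low_dim]
        by (intro sum.cong) auto
      then show ?thesis by simp
    qed
    have "card T \<le> N + 2"
    proof (rule card_le_if_subsets_independent[OF two N T])
      fix X assume X: "X \<subseteq> T" "card X = N"
      show "vec.independent X"
      proof
        assume "vec.dependent X"
        moreover have "finite X" using X(1) \<open>finite T\<close> finite_subset by blast
        ultimately have "vec.dim X \<le> N - 1" using vec.dim_less_card_if_dependent X(2) by fastforce
        then show False using low_dim[OF X(1)] sum_eq_card[OF X(1)] X(2) N by simp
      qed
    qed
    then show ?thesis using sum_eq_card[OF order_refl] by simp
  qed
qed

lemma sum_proj_points_le:
  fixes K :: "(nat \<Rightarrow> 'a::{field,finite}) set \<Rightarrow> nat"
  assumes two: "card (UNIV :: 'a set) = 2" and N: "4 \<le> N"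
    and K: "\<forall>S\<in>proj_subspaces N (N - 2). mult_of N K S \<le> N - 1"
  shows "(\<Sum>P\<in>proj_points N. K P) \<le> N + 2"
proof -
  define T where "T = {v\<in>nonzero_vecs N. 0 < K {0, v}}"
  have T_sub: "T \<subseteq> nonzero_vecs N" by (auto simp: T_def)
  have "(\<Sum>P\<in>proj_points N. K P) = (\<Sum>v\<in>T. K {0, v})"
    unfolding sum_proj_points_card_2[OF two] using finite_nonzero_vecs
    by (intro sum.mono_neutral_right) (auto simp: T_def)
  also have "\<dots> \<le> N + 2"
  proof (rule sum_weights_le_if_low_dim_bounded[OF two N])
    show "T \<subseteq> vecs N" using T_sub by (auto simp: nonzero_vecs_def)
    show "0 < K {0, v}" if "v \<in> T" for v using that by (simp add: T_def)
    show "(\<Sum>v\<in>X. K {0, v}) \<le> N - 1" if "X \<subseteq> T" "vec.dim X \<le> N - 1" for X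
      using sum_points_le_if_dim_le[OF two K, of X] that T_sub N by simp
  qed
  finally show ?thesis .
qed

theorem mainTheorem13:
  fixes k :: nat
  assumes "k \<ge> 5" and "card (UNIV :: 'a set) = 2"
  shows "m_q TYPE('a::{field,finite}) (k - 3) (k - 1) (k - 2) = k + 1"
proof -
  define N where "N = k - 1"
  have N: "4 \<le> N" using assms(1) by (simp add: N_def)
  have "k - 3 = N - 2" "k - 2 = N - 1" "k - 1 = N" "k + 1 = N + 2"
    using assms(1) by (auto simp: N_def)
  then show ?thesis
    unfolding m_q_def
    using ex_multiset_frame[OF assms(2)] sum_proj_points_le[OF assms(2) N] N
    by (intro Greatest_equality) auto
qed

end
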